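(* In the spectrum pricing game described in the context, let $(\psi_1,\ldots,\psi_n)$ be any symmetric Nash equilibrium, and let $L_i$ and $U_i$ be the lower and upper endpoints of the support of $\psi_i$. Then for all $i,j\in\{1,\ldots,n\}$ with $j<i$, we have $U_i\le L_j$.
   Context: Spectrum pricing game. There are $l\ge 2$ primaries and $m$ secondaries, $1\le m<l$; there are $n$ channel states $1,\ldots,n$, plus state $0$ meaning "unavailable". Each primary owns one channel, which independently of the others is in state $i\in\{1,\ldots,n\}$ with probability $q_i>0$ and in state $0$ with probability $1-q$, where $q=\sum_{i=1}^n q_i\in(0,1)$. For each state $i\ge1$ there is a penalty function $g_i$, continuous and strictly increasing in the price, with inverse $f_i$, also continuous and strictly increasing. Quoting price $p$ for a channel in state $i$ means the channel offers penalty $g_i(p)$; equivalently, choosing penalty $x$ in state $i$ means charging price $f_i(x)$. Higher states are better: $g_i(p)>g_j(p)$ for all $p$ and $f_i(x)<f_j(x)$ for all $x$ whenever $i<j$. There is a transition cost $c>0$ and a maximum acceptable penalty $v$ with $g_1(c)<v$. We assume that all points used below lie in the common domain of the $f_i$, and that for all $j<k$ and all $x>y>g_j(c)$, $$\frac{f_j(y)-c}{f_k(y)-c}<\frac{f_j(x)-c}{f_k(x)-c}. \qquad (\ast)$$ Each primary knows only its own channel state. A primary whose channel is in state $j\ge1$ draws its penalty from a distribution function $\psi_j$, independently of everything else. A primary in state $0$ offers penalty $v+1$, which is equivalent to not offering its channel. If $Y$ channels are offered with penalty at most $v$, the $\min(Y,m)$ channels with the lowest penalties are sold, with ties broken uniformly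 at random. A primary selling at price $p$ earns $p-c$; otherwise it earns $0$. Strategies and equilibrium. A symmetric strategy profile is one in which every primary uses the same $(\psi_1,\ldots,\psi_n)$. Given such a profile, let $r(x)$ be the probability that a given primary's channel offered at penalty $x$ is sold, and set $\phi_j(x)=(f_j(x)-c)\,r(x)$, the expected profit of choosing penalty $x$ in state $j$. A symmetric Nash equilibrium (NE) is a symmetric profile in which no primary, in any state $j$, can increase its expected profit by unilaterally replacing $\psi_j$ with any other distribution. A penalty $x$ is a best response in state $j$ if $\phi_j(x)=\sup_{y\in\mathbb{R}}\phi_j(y)=:u_{j,\max}$. For a distribution function $\psi_i$, write $L_i=\inf\{x:\psi_i(x)>0\}$ and $U_i=\inf\{x:\psi_i(x)=1\}$. *)

theory Defs
  imports "HOL-Probability.Probability"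
begin

(* States are 1..n; q i = probability that a channel is in state i;
   state 0 (probability 1 - sum q) means "unavailable", penalty v+1.
   M j = the probability measure (on the Borel sets of R) of the penalty
   drawn by a primary in state j; its distribution function is psi. *)

definition psi :: "(nat \<Rightarrow> real measure) \<Rightarrow> nat \<Rightarrow> real \<Rightarrow> real" where
  "psi M i x = measure (M i) {..x}"

definition lowerL :: "(nat \<Rightarrow> real measure) \<Rightarrow> nat \<Rightarrow> ereal" where
  "lowerL M i = Inf {ereal x | x. psi M i x > 0}"

definition upperU :: "(nat \<Rightarrow> real measure) \<Rightarrow> nat \<Rightarrow> ereal" where
  "upperU M i = Inf {ereal x | x. psi M i x = 1}"

(* probability that one given other primary offers penalty strictly below x *)
definition other_below ::
  "nat \<Rightarrow> (nat \<Rightarrow> real) \<Rightarrow> real \<Rightarrow> (nat \<Rightarrow> real measure) \<Rightarrow> real \<Rightarrow> real" where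
  "other_below n q v M x =
     (1 - (\<Sum>i=1..n. q i)) * (if v + 1 < x then 1 else 0)
     + (\<Sum>k=1..n. q k * measure (M k) {..<x})"

definition other_at ::
  "nat \<Rightarrow> (nat \<Rightarrow> real) \<Rightarrow> real \<Rightarrow> (nat \<Rightarrow> real measure) \<Rightarrow> real \<Rightarrow> real" where
  "other_at n q v M x =
     (1 - (\<Sum>i=1..n. q i)) * (if v + 1 = x then 1 else 0)
     + (\<Sum>k=1..n. q k * measure (M k) {x})"

(* r(x): probability that a channel offered at penalty x is sold, when the
   other l-1 primaries play the symmetric profile M.  i = number of others
   strictly below x, k = number of others tied at x (multinomial law);
   ties broken uniformly at random among the k+1 tied channels. *)
definition sale_prob ::
  "nat \<Rightarrow> nat \<Rightarrow> nat \<Rightarrow> (nat \<Rightarrow> real) \<Rightarrow> real \<Rightarrow> (nat \<Rightarrow> real measure) \<Rightarrow> real \<Rightarrow> real" where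
  "sale_prob l m n q v M x =
     (if x \<le> v then
        (let a = other_below n q v M x; b = other_at n q v M x in
          \<Sum>i\<in>{0..l-1}. \<Sum>k\<in>{0..l-1-i}.
             real ((l-1) choose i) * real ((l-1-i) choose k)
             * a ^ i * b ^ k * (1 - a - b) ^ (l-1-i-k)
             * (if i < m then min 1 (real (m - i) / real (k + 1)) else 0))
      else 0)"

definition profit ::
  "nat \<Rightarrow> nat \<Rightarrow> nat \<Rightarrow> (nat \<Rightarrow> real) \<Rightarrow> real \<Rightarrow> real \<Rightarrow> (nat \<Rightarrow> real \<Rightarrow> real)
   \<Rightarrow> (nat \<Rightarrow> real measure) \<Rightarrow> nat \<Rightarrow> real \<Rightarrow> real" where
  "profit l m n q v c f M j x = (f j x - c) * sale_prob l m n q v M x"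

definition is_symNE ::
  "nat \<Rightarrow> nat \<Rightarrow> nat \<Rightarrow> (nat \<Rightarrow> real) \<Rightarrow> real \<Rightarrow> real \<Rightarrow> (nat \<Rightarrow> real \<Rightarrow> real)
   \<Rightarrow> (nat \<Rightarrow> real measure) \<Rightarrow> bool" where
  "is_symNE l m n q v c f M \<longleftrightarrow>
     (\<forall>j\<in>{1..n}. prob_space (M j) \<and> sets (M j) = sets borel \<and>
        integrable (M j) (profit l m n q v c f M j) \<and>
        (\<forall>N. prob_space N \<and> sets N = sets borel \<and> integrable N (profit l m n q v c f M j)
             \<longrightarrow> integral\<^sup>L N (profit l m n q v c f M j)
                 \<le> integral\<^sup>L (M j) (profit l m n q v c f M j)))"

end

theory Submission imports Defs begin

(* In a symmetric NE every state k has a positive equilibrium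
   value u_k (quoting penalty v is always profitable), u_k bounds the profit
   phi_k everywhere, and phi_k = u_k almost surely under psi_k.  If L_j < U_i,
   there is a point x0 such that psi_j puts positive mass on (-inf,x0] and
   psi_i positive mass on (x0,inf); so there are best responses y <= x0 of
   state j and x > x0 of state i, both with positive sale probability.
   Comparing phi_i(x) >= phi_i(y) and phi_j(y) >= phi_j(x) contradicts the
   single-crossing condition on the price ratios. *)

(* A point and the open ray below it are disjoint events. *)
lemma prob_lessThan_plus_singleton_le_one:
  assumes "prob_space N" "sets N = sets borel"
  shows "measure N {..<x} + measure N {x::real} \<le> 1"
proof -
  interpret prob_space N by fact
  have "measure N {..<x} + measure N {x} = measure N ({..<x} \<union> {x})"
    by (subst finite_measure_Union) (auto simp: assms(2))
  also have "\<dots> \<le> 1" by simp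
  finally show ?thesis .
qed

(* Any acceptable penalty is sold with positive probability: with positive
   probability all other channels are unavailable (the term i = k = 0). *)
lemma sale_prob_pos:
  assumes m: "1 \<le> m" and qpos: "\<forall>i\<in>{1..n}. q i > 0" and qs: "(\<Sum>i=1..n. q i) < 1"
    and P: "\<forall>k\<in>{1..n}. prob_space (M k) \<and> sets (M k) = sets borel"
    and x: "x \<le> v"
  shows "sale_prob l m n q v M x > 0"
proof -
  define a where "a = other_below n q v M x"
  define b where "b = other_at n q v M x"
  have a: "a = (\<Sum>k=1..n. q k * measure (M k) {..<x})"
    using x by (simp add: a_def other_below_def)
  have b: "b = (\<Sum>k=1..n. q k * measure (M k) {x})"
    using x by (simp add: b_def other_at_def)
  have a0: "a \<ge> 0"
    unfolding a using qpos by (intro sum_nonneg mult_nonneg_nonneg) (auto intro: less_imp_le)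
  have b0: "b \<ge> 0"
    unfolding b using qpos by (intro sum_nonneg mult_nonneg_nonneg) (auto intro: less_imp_le)
  have "a + b = (\<Sum>k=1..n. q k * (measure (M k) {..<x} + measure (M k) {x}))"
    unfolding a b by (simp add: sum.distrib[symmetric] algebra_simps)
  also have "\<dots> \<le> (\<Sum>k=1..n. q k)"
    using qpos P prob_lessThan_plus_singleton_le_one
    by (intro sum_mono) (metis mult_left_le less_imp_le)
  finally have ab: "a + b < 1" using qs by linarith
  define T where "T = (\<lambda>i k. real ((l-1) choose i) * real ((l-1-i) choose k)
             * a ^ i * b ^ k * (1 - a - b) ^ (l-1-i-k)
             * (if i < m then min 1 (real (m - i) / real (k + 1)) else 0))"
  have T_nonneg: "T i k \<ge> 0" for i k unfolding T_def using a0 b0 ab by auto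
  have "0 < T 0 0" unfolding T_def using m ab by auto
  also have "T 0 0 \<le> (\<Sum>k\<in>{0..l-1-0}. T 0 k)"
    by (rule member_le_sum) (auto intro: T_nonneg)
  also have "\<dots> \<le> (\<Sum>i\<in>{0..l-1}. \<Sum>k\<in>{0..l-1-i}. T i k)"
    by (rule member_le_sum[where f="\<lambda>i. \<Sum>k\<in>{0..l-1-i}. T i k"])
      (auto intro: sum_nonneg T_nonneg)
  finally show ?thesis
    using x unfolding sale_prob_def Let_def a_def[symmetric] b_def[symmetric] T_def by simp
qed

lemma sale_prob_nonneg:
  assumes "1 \<le> m" "\<forall>i\<in>{1..n}. q i > 0" "(\<Sum>i=1..n. q i) < 1"
    and "\<forall>k\<in>{1..n}. prob_space (M k) \<and> sets (M k) = sets borel"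
  shows "sale_prob l m n q v M x \<ge> 0"
proof (cases "x \<le> v")
  case True
  then show ?thesis using sale_prob_pos[OF assms True, of l] by simp
qed (simp add: sale_prob_def)

(* If N maximises the expected value of phi among all Borel probability
   measures, then its value bounds phi everywhere (compare with Dirac
   measures) and phi attains this value N-almost surely. *)
lemma optimal_distribution_value:
  fixes \<phi> :: "real \<Rightarrow> real"
  assumes N: "prob_space N" "sets N = sets borel" "integrable N \<phi>"
    and opt: "\<forall>N'. prob_space N' \<and> sets N' = sets borel \<and> integrable N' \<phi>
             \<longrightarrow> integral\<^sup>L N' \<phi> \<le> integral\<^sup>L N \<phi>"
  shows "\<forall>x. \<phi> x \<le> integral\<^sup>L N \<phi>" "AE x in N. \<phi> x = integral\<^sup>L N \<phi>"
proof -
  have meas: "\<phi> \<in> borel_measurable borel"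
    using borel_measurable_integrable[OF N(3)] measurable_cong_sets[OF N(2) refl] by blast
  show le: "\<forall>x. \<phi> x \<le> integral\<^sup>L N \<phi>"
  proof
    fix x :: real
    have dirac: "prob_space (return borel x)" by (rule prob_space_return) simp
    have "(\<integral>\<^sup>+ a. ennreal (norm (\<phi> a)) \<partial>return borel x) = ennreal (norm (\<phi> x))"
      by (rule nn_integral_return) (use meas in auto)
    then have "integrable (return borel x) \<phi>"
      using meas by (intro integrableI_bounded) auto
    moreover have "integral\<^sup>L (return borel x) \<phi> = \<phi> x"
      by (rule integral_return) (use meas in auto)
    ultimately show "\<phi> x \<le> integral\<^sup>L N \<phi>" using opt dirac by force
  qed
  interpret prob_space N by fact
  define u where "u = integral\<^sup>L N \<phi>"
  have gap_int: "integrable N (\<lambda>x. u - \<phi> x)" using N(3) by simp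
  have "integral\<^sup>L N (\<lambda>x. u - \<phi> x) = 0"
    using N(3) by (simp add: u_def prob_space)
  then have "AE x in N. u - \<phi> x = 0"
    using integral_nonneg_eq_0_iff_AE[OF gap_int] le u_def by simp
  then show "AE x in N. \<phi> x = integral\<^sup>L N \<phi>" unfolding u_def by (auto elim: AE_mp)
qed

lemma AE_witness:
  assumes "sets N = sets borel" "AE x in N. P x" "S \<in> sets borel" "measure N S > 0"
  shows "\<exists>x\<in>S. P x"
proof (rule ccontr)
  assume "\<not> ?thesis"
  then have "AE x in N. x \<notin> S" using assms(2) by (auto elim: AE_mp)
  then have "emeasure N S = 0"
    using AE_iff_measurable[of S N "\<lambda>x. x \<notin> S"] assms(1,3) sets_eq_imp_space_eq[OF assms(1)]
    by auto
  then show False using assms(4) by (simp add: measure_def)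
qed

lemma mass_above_below_upperU:
  assumes P: "prob_space (M i)" "sets (M i) = sets borel" and x: "ereal x < upperU M i"
  shows "measure (M i) {x<..} > 0"
proof -
  interpret prob_space "M i" by fact
  have "psi M i x \<noteq> 1"
  proof
    assume "psi M i x = 1"
    then have "upperU M i \<le> ereal x" unfolding upperU_def by (auto intro: Inf_lower)
    then show False using x by simp
  qed
  then have below: "measure (M i) {..x} < 1"
    using prob_le_1[of "{..x}"] unfolding psi_def by linarith
  have "space (M i) - {..x} = {x<..}"
    using sets_eq_imp_space_eq[OF P(2)] by auto
  then have "measure (M i) {x<..} = 1 - measure (M i) {..x}"
    using prob_compl[of "{..x}"] P(2) by simp
  then show ?thesis using below by simp
qed

lemma overlapping_supports_witnesses:
  assumes Pi: "prob_space (M i)" "sets (M i) = sets borel"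
    and Pj: "sets (M j) = sets borel"
    and AEi: "AE x in M i. Q x" and AEj: "AE y in M j. R y"
    and overlap: "lowerL M j < upperU M i"
  obtains x y where "y < x" "Q x" "R y"
proof -
  obtain x0 where "psi M j x0 > 0" "ereal x0 < upperU M i"
    using overlap unfolding lowerL_def by (auto simp: Inf_less_iff)
  then have below: "measure (M j) {..x0} > 0" and above: "measure (M i) {x0<..} > 0"
    using mass_above_below_upperU[of M i, OF Pi] unfolding psi_def by auto
  obtain x where "x \<in> {x0<..}" "Q x"
    using AE_witness[OF Pi(2) AEi greaterThan_borel above] by blast
  moreover obtain y where "y \<in> {..x0}" "R y"
    using AE_witness[OF Pj AEj atMost_borel below] by blast
  ultimately show ?thesis using that[of y x] by simp
qed

lemma no_crossing_best_responses:
  fixes Fi Fj r :: "real \<Rightarrow> real" and c x y :: real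
  assumes r_nonneg: "r x \<ge> 0" "r y \<ge> 0"
    and profitable: "(Fi x - c) * r x > 0" "(Fj y - c) * r y > 0"
    and best_i: "(Fi y - c) * r y \<le> (Fi x - c) * r x"
    and best_j: "(Fj x - c) * r x \<le> (Fj y - c) * r y"
    and order: "Fj y < Fi y" "Fj y < Fj x"
    and ratio: "c < Fj y \<Longrightarrow> (Fj y - c) / (Fi y - c) < (Fj x - c) / (Fi x - c)"
  shows False
proof -
  have rx: "r x > 0" and A: "Fi x - c > 0"
    using profitable(1) r_nonneg(1) by (auto simp: zero_less_mult_iff)
  have ry: "r y > 0" and C: "Fj y - c > 0"
    using profitable(2) r_nonneg(2) by (auto simp: zero_less_mult_iff)
  have B: "Fi y - c > 0" and D: "Fj x - c > 0" using C order by auto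
  have "(Fj y - c) * ((Fi y - c) * r y) \<le> (Fj y - c) * ((Fi x - c) * r x)"
    using best_i C by (intro mult_left_mono) auto
  moreover have "(Fi y - c) * ((Fj x - c) * r x) \<le> (Fi y - c) * ((Fj y - c) * r y)"
    using best_j B by (intro mult_left_mono) auto
  ultimately have "((Fi y - c) * (Fj x - c)) * r x \<le> ((Fj y - c) * (Fi x - c)) * r x"
    by (simp add: algebra_simps)
  then have "(Fi y - c) * (Fj x - c) \<le> (Fj y - c) * (Fi x - c)" using rx by simp
  moreover have "(Fj y - c) * (Fi x - c) < (Fj x - c) * (Fi y - c)"
    using ratio C A B by (simp add: field_simps)
  ultimately show False by (simp add: algebra_simps)
qed

lemma cost_below_price_at_v:
  fixes f g :: "nat \<Rightarrow> real \<Rightarrow> real" and k n :: nat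
  assumes k: "k \<in> {1..n}"
    and mono: "\<forall>i\<in>{1..n}. strict_mono (f i)"
    and inv: "\<forall>i\<in>{1..n}. \<forall>p. f i (g i p) = p"
    and better: "\<forall>i\<in>{1..n}. \<forall>j\<in>{1..n}. i < j \<longrightarrow> (\<forall>p. g i p > g j p)"
    and v: "g 1 c < v"
  shows "c < f k v"
proof -
  have "g k c \<le> g 1 c"
  proof (cases "k = 1")
    case False
    then have "1 < k" "1 \<in> {1..n}" using k by auto
    then show ?thesis using better k by (meson less_imp_le)
  qed simp
  then have "f k (g k c) < f k v" using v mono k by (meson le_less_trans strict_monoD)
  then show ?thesis using inv k by simp
qed

lemma symNE_state_value:
  assumes NE: "is_symNE l m n q v c f M" and k: "k \<in> {1..n}"
    and m: "1 \<le> m" and qpos: "\<forall>i\<in>{1..n}. q i > 0" and qs: "(\<Sum>i=1..n. q i) < 1"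
    and cv: "c < f k v"
  shows "\<forall>x. profit l m n q v c f M k x \<le> integral\<^sup>L (M k) (profit l m n q v c f M k)"
    and "AE x in M k. profit l m n q v c f M k x = integral\<^sup>L (M k) (profit l m n q v c f M k)"
    and "integral\<^sup>L (M k) (profit l m n q v c f M k) > 0"
proof -
  have P: "\<forall>k\<in>{1..n}. prob_space (M k) \<and> sets (M k) = sets borel"
    using NE unfolding is_symNE_def by blast
  have "prob_space (M k)" "sets (M k) = sets borel" "integrable (M k) (profit l m n q v c f M k)"
    "\<forall>N'. prob_space N' \<and> sets N' = sets borel \<and> integrable N' (profit l m n q v c f M k)
         \<longrightarrow> integral\<^sup>L N' (profit l m n q v c f M k)
             \<le> integral\<^sup>L (M k) (profit l m n q v c f M k)"
    using NE k unfolding is_symNE_def by blast+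
  note opt = optimal_distribution_value[OF this]
  show "\<forall>x. profit l m n q v c f M k x \<le> integral\<^sup>L (M k) (profit l m n q v c f M k)"
    "AE x in M k. profit l m n q v c f M k x = integral\<^sup>L (M k) (profit l m n q v c f M k)"
    by (fact opt)+
  have "0 < profit l m n q v c f M k v"
    unfolding profit_def using cv sale_prob_pos[OF m qpos qs P order.refl] by simp
  then show "integral\<^sup>L (M k) (profit l m n q v c f M k) > 0"
    using opt(1) by (meson less_le_trans)
qed

theorem theorem2:
  fixes l m n :: nat and q :: "nat \<Rightarrow> real" and f g :: "nat \<Rightarrow> real \<Rightarrow> real"
    and c v :: real and M :: "nat \<Rightarrow> real measure"
  assumes "l \<ge> 2" and "1 \<le> m" and "m < l"
    and "\<forall>i\<in>{1..n}. q i > 0"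
    and "0 < (\<Sum>i=1..n. q i)" and "(\<Sum>i=1..n. q i) < 1"
    and "\<forall>i\<in>{1..n}. continuous_on UNIV (g i) \<and> strict_mono (g i)
                      \<and> continuous_on UNIV (f i) \<and> strict_mono (f i)"
    and "\<forall>i\<in>{1..n}. (\<forall>p. f i (g i p) = p) \<and> (\<forall>x. g i (f i x) = x)"
    and "\<forall>i\<in>{1..n}. \<forall>j\<in>{1..n}. i < j \<longrightarrow>
            (\<forall>p. g i p > g j p) \<and> (\<forall>x. f i x < f j x)"
    and "c > 0" and "g 1 c < v"
    and "\<forall>j\<in>{1..n}. \<forall>k\<in>{1..n}. j < k \<longrightarrow>
            (\<forall>x y. x > y \<and> y > g j c \<longrightarrow>
               (f j y - c) / (f k y - c) < (f j x - c) / (f k x - c))"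
    and "is_symNE l m n q v c f M"
  shows "\<forall>i\<in>{1..n}. \<forall>j\<in>{1..n}. j < i \<longrightarrow> upperU M i \<le> lowerL M j"
proof (intro ballI impI)
  fix i j assume i: "i \<in> {1..n}" and j: "j \<in> {1..n}" and ji: "j < i"
  let ?\<phi> = "profit l m n q v c f M" and ?r = "sale_prob l m n q v M"
  have P: "\<forall>k\<in>{1..n}. prob_space (M k) \<and> sets (M k) = sets borel"
    using assms(13) unfolding is_symNE_def by blast
  have best: "\<forall>x. ?\<phi> k x \<le> integral\<^sup>L (M k) (?\<phi> k)"
      "AE x in M k. ?\<phi> k x = integral\<^sup>L (M k) (?\<phi> k)" "integral\<^sup>L (M k) (?\<phi> k) > 0"
    if "k \<in> {1..n}" for k
    using symNE_state_value[OF assms(13) that assms(2,4,6)]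
      cost_below_price_at_v[of k n f g c v] assms(7-9,11) that by blast+
  show "upperU M i \<le> lowerL M j"
  proof (rule ccontr)
    assume "\<not> ?thesis"
    then have overlap: "lowerL M j < upperU M i" by simp
    have Pi: "prob_space (M i)" "sets (M i) = sets borel" and Pj: "sets (M j) = sets borel"
      using P i j by auto
    obtain x y where "y < x"
      and x: "?\<phi> i x = integral\<^sup>L (M i) (?\<phi> i)" and y: "?\<phi> j y = integral\<^sup>L (M j) (?\<phi> j)"
      by (rule overlapping_supports_witnesses[OF Pi Pj best(2)[OF i] best(2)[OF j] overlap])
    show False
    proof (rule no_crossing_best_responses[of ?r x y "f i" c "f j"])
      show "?r x \<ge> 0" "?r y \<ge> 0" using sale_prob_nonneg[OF assms(2,4,6) P] by auto
      show "(f i x - c) * ?r x > 0" "(f j y - c) * ?r y > 0"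
        using x y best(3) i j unfolding profit_def by auto
      show "(f i y - c) * ?r y \<le> (f i x - c) * ?r x" "(f j x - c) * ?r x \<le> (f j y - c) * ?r y"
        using x y best(1) i j unfolding profit_def by metis+
      show "f j y < f i y" "f j y < f j x" using assms(7,9) i j ji \<open>y < x\<close> by (auto dest: strict_monoD)
      assume "c < f j y"
      then have "g j c < y" using assms(7,8) j by (metis strict_monoD)
      then show "(f j y - c) / (f i y - c) < (f j x - c) / (f i x - c)"
        using assms(12) i j ji \<open>y < x\<close> by blast
    qed
  qed
qed

end
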